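(* For every $J\subseteq[n]$ and every $j\in J$, the polynomial $\partial_j h^2_{n-|J|+1}(J)$ lies in the ideal $\mathcal I_J=(p_{J,1},\dots,p_{J,n})\subseteq\mathbb C[x_1,\dots,x_n]$.
   Context: $\partial_j=\partial/\partial x_j$. For $S\subseteq[n]$ and an integer $r$, $h^2_r(S)$ is the complete homogeneous symmetric polynomial of degree $r$ in the variables $\{x_s^2:s\in S\}$ (with $h^2_0(S)=1$, $h^2_r(S)=0$ for $r<0$). For $J\subseteq[n]$ and $i\in[n]$ put $r_i=n-|J\cup\{i,\dots,n\}|+1$ and define $p_{J,i}=h^2_{r_i}(J\cup\{i,\dots,n\})$ if $i\notin J$, and $p_{J,i}=\partial_i h^2_{r_i}(J\cup\{i,\dots,n\})$ if $i\in J$. *)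

theory Defs
  imports Complex_Main "HOL-Library.Poly_Mapping"
begin

text \<open>Polynomials in C[x_1,...,x_n] are represented as finitely supported maps from
monomials (exponent vectors nat =>0 nat, indexed by variable number) to coefficients.\<close>

type_synonym mpoly = "(nat \<Rightarrow>\<^sub>0 nat) \<Rightarrow>\<^sub>0 complex"

definition monom :: "(nat \<Rightarrow>\<^sub>0 nat) \<Rightarrow> complex \<Rightarrow> mpoly" where
  "monom m c = Poly_Mapping.single m c"

definition Var :: "nat \<Rightarrow> mpoly" where
  "Var s = monom (Poly_Mapping.single s 1) 1"

text \<open>Complete homogeneous symmetric polynomial of degree r in the variables x_s^2, s in S.\<close>
definition h2 :: "nat \<Rightarrow> nat set \<Rightarrow> mpoly" where
  "h2 r S = (\<Sum>a\<in>{a :: nat \<Rightarrow>\<^sub>0 nat. Poly_Mapping.keys a \<subseteq> S \<and> (\<Sum>s\<in>S. Poly_Mapping.lookup a s) = r}.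
              \<Prod>s\<in>S. (Var s) ^ (2 * Poly_Mapping.lookup a s))"

definition pd :: "nat \<Rightarrow> mpoly \<Rightarrow> mpoly" where
  "pd j p = (\<Sum>m\<in>Poly_Mapping.keys p. monom (m - Poly_Mapping.single j 1)
                              (Poly_Mapping.lookup p m * of_nat (Poly_Mapping.lookup m j)))"

text \<open>r_i = n - |J \<union> {i..n}| + 1 (always \<ge> 1 for J \<subseteq> [n]).\<close>
definition rr :: "nat \<Rightarrow> nat set \<Rightarrow> nat \<Rightarrow> nat" where
  "rr n J i = n + 1 - card (J \<union> {i..n})"

definition pJ :: "nat \<Rightarrow> nat set \<Rightarrow> nat \<Rightarrow> mpoly" where
  "pJ n J i = (if i \<notin> J then h2 (rr n J i) (J \<union> {i..n})
               else pd i (h2 (rr n J i) (J \<union> {i..n})))"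

definition in_IJ :: "nat \<Rightarrow> nat set \<Rightarrow> mpoly \<Rightarrow> bool" where
  "in_IJ n J f \<longleftrightarrow> (\<exists>g :: nat \<Rightarrow> mpoly. f = (\<Sum>i=1..n. g i * pJ n J i))"

end

theory Submission
  imports Defs
begin

(* Write T_i = J \<union> {i..n} and r_i = n + 1 - |T_i|, so the generators of I_J are
   h_{r_i}(T_i) for i \<notin> J and \<partial>_i h_{r_i}(T_i) for i \<in> J. By induction on m we show
   that for every i \<le> n + 1 with r_i \<le> m both h_m(T_i) and \<partial>_k h_m(T_i), k \<in> J, k < i,
   lie in I_J. Both facts propagate along the chain T_1 \<supseteq> ... \<supseteq> T_{n+1} = J through
   the recursion h_{m+1}(T \<union> {i}) = h_{m+1}(T) + x_i^2 h_m(T \<union> {i}) and the Leibniz rule: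
   the derivatives by increasing i, the polynomials h_{m+1}(T_i) by decreasing i, starting
   at T_{n+1} = J from Euler's identity \<Sum>_{k\<in>J} x_k \<partial>_k h_{m+1}(J) = 2(m+1) h_{m+1}(J).
   The theorem is the case i = n + 1, m = r_{n+1} = n - |J| + 1. *)

section \<open>Partial derivatives\<close>

lemma poly_mapping_sum_single:
  "(\<Sum>a\<in>Poly_Mapping.keys p. Poly_Mapping.single a (Poly_Mapping.lookup p a)) = p"
  by (rule poly_mapping_eqI)
    (auto simp: lookup_sum lookup_single when_def in_keys_iff
      intro: sum.neutral elim: sum.remove[THEN trans])

lemma pd_eq_sum_over_superset:
  assumes "finite K" "Poly_Mapping.keys p \<subseteq> K"
  shows "pd j p = (\<Sum>m\<in>K. monom (m - Poly_Mapping.single j 1)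
                   (Poly_Mapping.lookup p m * of_nat (Poly_Mapping.lookup m j)))"
  unfolding pd_def
  by (rule sum.mono_neutral_left) (auto simp: assms monom_def in_keys_iff)

lemma pd_add: "pd j (p + q) = pd j p + pd j q"
proof -
  let ?K = "Poly_Mapping.keys p \<union> Poly_Mapping.keys q"
  let ?term = "\<lambda>p m. monom (m - Poly_Mapping.single j 1)
                 (Poly_Mapping.lookup p m * of_nat (Poly_Mapping.lookup m j))"
  have "pd j (p + q) = (\<Sum>m\<in>?K. ?term (p + q) m)"
    by (rule pd_eq_sum_over_superset) (simp_all add: keys_add)
  also have "\<dots> = (\<Sum>m\<in>?K. ?term p m + ?term q m)"
    by (simp add: lookup_add monom_def distrib_right single_add)
  also have "\<dots> = pd j p + pd j q"
    using pd_eq_sum_over_superset[of ?K p j] pd_eq_sum_over_superset[of ?K q j]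
    by (simp add: sum.distrib)
  finally show ?thesis .
qed

lemma pd_zero [simp]: "pd j 0 = 0"
  by (simp add: pd_def)

lemma pd_sum: "pd j (sum f A) = (\<Sum>a\<in>A. pd j (f a))"
  by (induction A rule: infinite_finite_induct) (auto simp: pd_add)

lemma pd_single:
  "pd j (Poly_Mapping.single a c) =
   Poly_Mapping.single (a - Poly_Mapping.single j 1) (c * of_nat (Poly_Mapping.lookup a j))"
  by (cases "c = 0") (simp_all add: pd_def monom_def)

lemma pd_single_mult:
  "pd j (Poly_Mapping.single a c * Poly_Mapping.single b d) =
   pd j (Poly_Mapping.single a c) * Poly_Mapping.single b d +
   Poly_Mapping.single a c * pd j (Poly_Mapping.single b d)"
proof -
  let ?e = "Poly_Mapping.single j (1::nat)"
  \<comment> \<open>If the exponent of x_j in b is positive, subtracting ?e commutes with adding a;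
      otherwise the coefficient vanishes anyway.\<close>
  have shift: "Poly_Mapping.single (a + (b - ?e)) (z * of_nat (Poly_Mapping.lookup b j)) =
               Poly_Mapping.single (a + b - ?e) (z * of_nat (Poly_Mapping.lookup b j) :: complex)"
    for a b :: "nat \<Rightarrow>\<^sub>0 nat" and z
  proof (cases "Poly_Mapping.lookup b j = 0")
    case False
    then have "a + (b - ?e) = a + b - ?e"
      by (intro poly_mapping_eqI) (auto simp: lookup_add lookup_minus lookup_single when_def)
    then show ?thesis by simp
  qed simp
  show ?thesis
    using shift[of a b "c * d"] shift[of b a "c * d"]
    by (simp add: mult_single pd_single lookup_add single_add[symmetric]
        algebra_simps)
qed

lemma pd_mult: "pd j (p * q) = pd j p * q + p * pd j q"
proof -
  let ?P = "Poly_Mapping.keys p" and ?Q = "Poly_Mapping.keys q"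
  let ?sp = "\<lambda>a. Poly_Mapping.single a (Poly_Mapping.lookup p a)"
  let ?sq = "\<lambda>b. Poly_Mapping.single b (Poly_Mapping.lookup q b)"
  have "pd j (p * q) = pd j ((\<Sum>a\<in>?P. ?sp a) * (\<Sum>b\<in>?Q. ?sq b))"
    by (simp only: poly_mapping_sum_single)
  also have "\<dots> = (\<Sum>a\<in>?P. \<Sum>b\<in>?Q. pd j (?sp a) * ?sq b + ?sp a * pd j (?sq b))"
    by (simp add: sum_product pd_sum pd_single_mult)
  also have "\<dots> = (\<Sum>a\<in>?P. pd j (?sp a)) * (\<Sum>b\<in>?Q. ?sq b) +
                  (\<Sum>a\<in>?P. ?sp a) * (\<Sum>b\<in>?Q. pd j (?sq b))"
    by (simp add: sum.distrib sum_product)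
  also have "\<dots> = pd j p * q + p * pd j q"
    by (simp only: pd_sum[symmetric] poly_mapping_sum_single)
  finally show ?thesis .
qed

lemma pd_one [simp]: "pd j 1 = 0"
  using pd_single[of j 0 1] by simp

lemma pd_Var: "pd j (Var s) = (if s = j then 1 else 0)"
  by (auto simp: Var_def monom_def pd_single lookup_single)

lemma pd_Var_power2: "pd j (Var s ^ 2) = (if s = j then 2 * Var s else 0)"
  by (simp add: power2_eq_square pd_mult pd_Var)

section \<open>The recursion for h2\<close>

definition sq_exponents :: "nat \<Rightarrow> nat set \<Rightarrow> (nat \<Rightarrow>\<^sub>0 nat) set" where
  "sq_exponents r S = {a. Poly_Mapping.keys a \<subseteq> S \<and> (\<Sum>s\<in>S. Poly_Mapping.lookup a s) = r}"

definition sq_monom :: "nat set \<Rightarrow> (nat \<Rightarrow>\<^sub>0 nat) \<Rightarrow> mpoly" where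
  "sq_monom S a = (\<Prod>s\<in>S. Var s ^ (2 * Poly_Mapping.lookup a s))"

lemma h2_eq_sum_sq_monom: "h2 r S = sum (sq_monom S) (sq_exponents r S)"
  unfolding h2_def sq_exponents_def sq_monom_def ..

lemma finite_sq_exponents:
  assumes "finite S"
  shows "finite (sq_exponents r S)"
proof -
  have "Poly_Mapping.lookup a x \<le> r" if "a \<in> sq_exponents r S" "x \<in> S" for a x
    using that member_le_sum[OF that(2) _ assms, of "Poly_Mapping.lookup a"]
    by (simp add: sq_exponents_def)
  moreover have "Poly_Mapping.lookup a x = 0" if "a \<in> sq_exponents r S" "x \<notin> S" for a x
    using that by (auto simp: sq_exponents_def in_keys_iff)
  ultimately have "Poly_Mapping.lookup ` sq_exponents r S \<subseteq>
        {f. \<forall>x. (x \<in> S \<longrightarrow> f x \<in> {0..r}) \<and> (x \<notin> S \<longrightarrow> f x = 0)}"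
    by auto
  then have "finite (Poly_Mapping.lookup ` sq_exponents r S)"
    by (rule finite_subset) (rule finite_set_of_finite_funs, simp_all add: assms)
  then show ?thesis
    by (rule finite_imageD) (simp add: inj_on_def poly_mapping_eqI)
qed

lemma h2_empty: "h2 r {} = (if r = 0 then 1 else 0)"
  by (auto simp: h2_eq_sum_sq_monom sq_exponents_def sq_monom_def)

lemma h2_0:
  assumes "finite S"
  shows "h2 0 S = 1"
proof -
  have "sq_exponents 0 S = {0}"
    using assms by (auto simp: sq_exponents_def in_keys_iff intro!: poly_mapping_eqI)
  then show ?thesis
    by (simp add: h2_eq_sum_sq_monom sq_monom_def)
qed

lemma lookup_add_single:
  "Poly_Mapping.lookup (b + Poly_Mapping.single k c) =
   (\<lambda>s. Poly_Mapping.lookup b s + (if s = k then c else 0))"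
  by (auto simp: lookup_add lookup_single)

lemma sum_lookup_add_single:
  assumes "finite T" "k \<in> T"
  shows "(\<Sum>s\<in>T. Poly_Mapping.lookup (b + Poly_Mapping.single k c) s) =
         (\<Sum>s\<in>T. Poly_Mapping.lookup b s) + c"
  using assms by (simp add: lookup_add_single sum.distrib)

lemma sq_monom_add_single_1:
  assumes "finite T" "k \<in> T"
  shows "sq_monom T (b + Poly_Mapping.single k 1) = Var k ^ 2 * sq_monom T b"
proof -
  have "sq_monom T (b + Poly_Mapping.single k 1) =
        (\<Prod>s\<in>T. (if s = k then Var k ^ 2 else 1) * Var s ^ (2 * Poly_Mapping.lookup b s))"
    unfolding sq_monom_def
    by (rule prod.cong) (simp_all add: lookup_add_single power_add distrib_left)
  then show ?thesis
    using assms by (simp add: prod.distrib sq_monom_def)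
qed

lemma sq_exponents_Suc_bij:
  assumes "finite T" "k \<in> T"
  shows "bij_betw (\<lambda>b. b + Poly_Mapping.single k 1) (sq_exponents m T)
           {a \<in> sq_exponents (Suc m) T. Poly_Mapping.lookup a k \<noteq> 0}"
proof (rule bij_betw_byWitness[where f' = "\<lambda>a. a - Poly_Mapping.single k 1"])
  let ?e = "Poly_Mapping.single k (1::nat)"
  have add_sub: "a - ?e + ?e = a" if "Poly_Mapping.lookup a k \<noteq> 0" for a
    using that by (intro poly_mapping_eqI) (auto simp: lookup_add lookup_minus lookup_single when_def)
  show "\<forall>b\<in>sq_exponents m T. b + ?e - ?e = b"
    by (auto intro: poly_mapping_eqI simp: lookup_minus lookup_add_single)
  show "\<forall>a\<in>{a \<in> sq_exponents (Suc m) T. Poly_Mapping.lookup a k \<noteq> 0}. a - ?e + ?e = a"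
    using add_sub by blast
  have "b + ?e \<in> sq_exponents (Suc m) T \<and> Poly_Mapping.lookup (b + ?e) k \<noteq> 0"
    if "b \<in> sq_exponents m T" for b
  proof -
    have "Poly_Mapping.keys (b + ?e) \<subseteq> Poly_Mapping.keys b \<union> {k}"
      using keys_add[of b ?e] by simp
    then show ?thesis
      using that assms sum_lookup_add_single[OF assms, of b 1]
      by (auto simp: sq_exponents_def lookup_add)
  qed
  then show "(\<lambda>b. b + ?e) ` sq_exponents m T \<subseteq> {a \<in> sq_exponents (Suc m) T. Poly_Mapping.lookup a k \<noteq> 0}"
    by auto
  have "a - ?e \<in> sq_exponents m T"
    if a: "a \<in> sq_exponents (Suc m) T" "Poly_Mapping.lookup a k \<noteq> 0" for a
  proof -
    have "Suc (\<Sum>s\<in>T. Poly_Mapping.lookup (a - ?e) s) = Suc m"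
      using a sum_lookup_add_single[OF assms, of "a - ?e" 1] add_sub[of a]
      by (simp add: sq_exponents_def)
    moreover have "Poly_Mapping.keys (a - ?e) \<subseteq> T"
      using a by (auto simp: sq_exponents_def in_keys_iff lookup_minus)
    ultimately show ?thesis
      by (simp add: sq_exponents_def)
  qed
  then show "(\<lambda>a. a - ?e) ` {a \<in> sq_exponents (Suc m) T. Poly_Mapping.lookup a k \<noteq> 0} \<subseteq>
             sq_exponents m T"
    by auto
qed

lemma h2_insert:
  assumes "finite S" "k \<notin> S"
  shows "h2 (Suc m) (insert k S) = h2 (Suc m) S + Var k ^ 2 * h2 m (insert k S)"
proof -
  let ?T = "insert k S"
  let ?E = "sq_exponents (Suc m) ?T"
  have "{a \<in> ?E. Poly_Mapping.lookup a k = 0} = sq_exponents (Suc m) S"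
    using assms by (auto simp: sq_exponents_def in_keys_iff)
  moreover have "sq_monom ?T a = sq_monom S a" if "a \<in> sq_exponents (Suc m) S" for a
  proof -
    have "Poly_Mapping.lookup a k = 0"
      using assms that by (auto simp: sq_exponents_def in_keys_iff)
    then show ?thesis
      using assms by (simp add: sq_monom_def)
  qed
  ultimately have without_k: "sum (sq_monom ?T) {a \<in> ?E. Poly_Mapping.lookup a k = 0} = h2 (Suc m) S"
    by (simp add: h2_eq_sum_sq_monom)
  have "sum (sq_monom ?T) {a \<in> ?E. Poly_Mapping.lookup a k \<noteq> 0} =
        (\<Sum>b\<in>sq_exponents m ?T. sq_monom ?T (b + Poly_Mapping.single k 1))"
    using assms by (intro sum.reindex_bij_betw[symmetric] sq_exponents_Suc_bij) auto
  also have "\<dots> = (\<Sum>b\<in>sq_exponents m ?T. Var k ^ 2 * sq_monom ?T b)"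
    using assms by (intro sum.cong refl sq_monom_add_single_1) auto
  also have "\<dots> = Var k ^ 2 * h2 m ?T"
    by (simp add: h2_eq_sum_sq_monom sum_distrib_left)
  finally have with_k: "sum (sq_monom ?T) {a \<in> ?E. Poly_Mapping.lookup a k \<noteq> 0} = Var k ^ 2 * h2 m ?T" .
  have "h2 (Suc m) ?T = sum (sq_monom ?T)
          ({a \<in> ?E. Poly_Mapping.lookup a k = 0} \<union> {a \<in> ?E. Poly_Mapping.lookup a k \<noteq> 0})"
    unfolding h2_eq_sum_sq_monom by (rule arg_cong[where f = "sum _"]) blast
  also have "\<dots> = sum (sq_monom ?T) {a \<in> ?E. Poly_Mapping.lookup a k = 0} +
                  sum (sq_monom ?T) {a \<in> ?E. Poly_Mapping.lookup a k \<noteq> 0}"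
    using assms by (intro sum.union_disjoint) (auto simp: finite_sq_exponents)
  finally show ?thesis
    by (simp only: without_k with_k)
qed

lemma pd_h2_not_in:
  assumes "finite S" "i \<notin> S"
  shows "pd i (h2 m S) = 0"
  using assms
proof (induction S arbitrary: m rule: finite_induct)
  case empty
  then show ?case by (simp add: h2_empty)
next
  case (insert k S)
  then show ?case
    by (induction m) (simp_all add: h2_0 h2_insert pd_add pd_mult pd_Var_power2)
qed

section \<open>Euler's identity\<close>

definition euler :: "nat set \<Rightarrow> mpoly \<Rightarrow> mpoly" where
  "euler K p = (\<Sum>k\<in>K. Var k * pd k p)"

lemma euler_add: "euler K (p + q) = euler K p + euler K q"
  by (simp add: euler_def pd_add distrib_left sum.distrib)

lemma euler_mult: "euler K (p * q) = euler K p * q + p * euler K q"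
  by (simp add: euler_def pd_mult sum.distrib sum_distrib_left sum_distrib_right algebra_simps)

lemma euler_0 [simp]: "euler K 0 = 0"
  by (simp add: euler_def)

lemma euler_1 [simp]: "euler K 1 = 0"
  by (simp add: euler_def)

lemma euler_Var_power2:
  assumes "finite K" "s \<in> K"
  shows "euler K (Var s ^ 2) = 2 * Var s ^ 2"
proof -
  have "euler K (Var s ^ 2) = (\<Sum>k\<in>K. if k = s then Var s * (2 * Var s) else 0)"
    unfolding euler_def by (rule sum.cong) (simp_all add: pd_Var_power2)
  then show ?thesis
    using assms by (simp add: power2_eq_square)
qed

lemma euler_h2:
  assumes "finite K" "finite S" "S \<subseteq> K"
  shows "euler K (h2 m S) = of_nat (2 * m) * h2 m S"
  using assms(2,3)
proof (induction S arbitrary: m rule: finite_induct)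
  case empty
  then show ?case by (simp add: h2_empty)
next
  case (insert k S)
  then show ?case
    by (induction m)
      (simp_all add: h2_0 h2_insert euler_add euler_mult euler_Var_power2[OF assms(1)] algebra_simps)
qed

section \<open>The ideal I_J\<close>

lemma in_IJ_0: "in_IJ n J 0"
  unfolding in_IJ_def by (rule exI[of _ "\<lambda>_. 0"]) simp

lemma in_IJ_add:
  assumes "in_IJ n J f" "in_IJ n J g"
  shows "in_IJ n J (f + g)"
proof -
  obtain a b where "f = (\<Sum>i = 1..n. a i * pJ n J i)" "g = (\<Sum>i = 1..n. b i * pJ n J i)"
    using assms unfolding in_IJ_def by blast
  then have "f + g = (\<Sum>i = 1..n. (a i + b i) * pJ n J i)"
    by (simp add: distrib_right sum.distrib)
  then show ?thesis
    unfolding in_IJ_def by (rule exI[where x = "\<lambda>i. a i + b i"])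
qed

lemma in_IJ_mult:
  assumes "in_IJ n J f"
  shows "in_IJ n J (c * f)"
proof -
  obtain a where "f = (\<Sum>i = 1..n. a i * pJ n J i)"
    using assms unfolding in_IJ_def by blast
  then have "c * f = (\<Sum>i = 1..n. (c * a i) * pJ n J i)"
    by (simp add: sum_distrib_left mult.assoc)
  then show ?thesis
    unfolding in_IJ_def by (rule exI[where x = "\<lambda>i. c * a i"])
qed

lemma in_IJ_diff: "in_IJ n J f \<Longrightarrow> in_IJ n J g \<Longrightarrow> in_IJ n J (f - g)"
  using in_IJ_add[of n J f "(-1) * g"] in_IJ_mult[of n J g "-1"] by simp

lemma in_IJ_sum: "(\<And>a. a \<in> A \<Longrightarrow> in_IJ n J (f a)) \<Longrightarrow> in_IJ n J (sum f A)"
  by (induction A rule: infinite_finite_induct) (auto intro: in_IJ_add in_IJ_0)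

lemma pJ_in_IJ:
  assumes "i \<in> {1..n}"
  shows "in_IJ n J (pJ n J i)"
proof -
  have "(\<Sum>k = 1..n. (if k = i then 1 else 0) * pJ n J k) = (\<Sum>k = 1..n. if k = i then pJ n J k else 0)"
    by (rule sum.cong) simp_all
  also have "\<dots> = pJ n J i"
    using assms by simp
  finally show ?thesis
    unfolding in_IJ_def by (rule exI[where x = "\<lambda>k. if k = i then 1 else 0", OF sym])
qed

lemma in_IJ_of_nat_mult_cancel:
  assumes "N \<noteq> 0" "in_IJ n J (of_nat N * f)"
  shows "in_IJ n J f"
proof -
  have "Poly_Mapping.single 0 (1 / of_nat N) * (of_nat N * f) =
        (Poly_Mapping.single 0 (1 / of_nat N) * Poly_Mapping.single 0 (of_nat N)) * f"
    by (simp only: single_of_nat mult.assoc)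
  also have "\<dots> = f"
    using assms(1) by (simp add: mult_single del: single_of_nat)
  finally have "Poly_Mapping.single 0 (1 / of_nat N) * (of_nat N * f) = f" .
  with in_IJ_mult[OF assms(2)] show ?thesis
    by metis
qed

lemma pd_h2_Suc_self:
  assumes "finite S" "i \<in> S"
  shows "pd i (h2 (Suc m) S) = 2 * Var i * h2 m S + Var i ^ 2 * pd i (h2 m S)"
proof -
  have "h2 (Suc m) S = h2 (Suc m) (S - {i}) + Var i ^ 2 * h2 m S"
    using h2_insert[of "S - {i}" i m] assms by (simp add: insert_absorb)
  then show ?thesis
    using pd_h2_not_in[of "S - {i}" i "Suc m"] assms(1)
    by (simp add: pd_add pd_mult pd_Var_power2)
qed

lemma pd_h2_Suc_remove:
  assumes "finite S" "i \<notin> S" "k \<noteq> i"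
  shows "pd k (h2 (Suc m) S) = pd k (h2 (Suc m) (insert i S)) - Var i ^ 2 * pd k (h2 m (insert i S))"
  using h2_insert[OF assms(1,2), of m] assms(3)
  by (simp add: pd_add pd_mult pd_Var_power2)

lemma h2_Suc_in_IJ_by_euler:
  assumes "finite K" "\<And>k. k \<in> K \<Longrightarrow> in_IJ n J (pd k (h2 (Suc m) K))"
  shows "in_IJ n J (h2 (Suc m) K)"
proof -
  have "in_IJ n J (euler K (h2 (Suc m) K))"
    unfolding euler_def using assms(2) by (intro in_IJ_sum in_IJ_mult)
  then have "in_IJ n J (of_nat (2 * Suc m) * h2 (Suc m) K)"
    using euler_h2[OF assms(1) assms(1)] by simp
  then show ?thesis
    by (rule in_IJ_of_nat_mult_cancel[rotated]) simp
qed

section \<open>Descending the chain J \<union> {i..n}\<close>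

lemma union_atLeastAtMost_Suc_in:
  "i \<in> J \<Longrightarrow> J \<union> {Suc i..n} = J \<union> {i..n}"
  by (cases "i \<le> n") (auto simp flip: atLeastAtMost_insertL)

lemma union_atLeastAtMost_eq_insert:
  "i \<le> n \<Longrightarrow> J \<union> {i..n} = insert i (J \<union> {Suc i..n})"
  by (auto simp flip: atLeastAtMost_insertL)

lemma rr_Suc_in: "i \<in> J \<Longrightarrow> rr n J (Suc i) = rr n J i"
  by (simp add: rr_def union_atLeastAtMost_Suc_in)

context
  fixes n :: nat and J :: "nat set"
  assumes J_subset: "J \<subseteq> {1..n}"
begin

lemma finite_J [simp]: "finite J"
  using finite_subset[OF J_subset] by simp

lemma card_union_atLeastAtMost_le: "1 \<le> i \<Longrightarrow> card (J \<union> {i..n}) \<le> n"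
  using card_mono[of "{1..n}" "J \<union> {i..n}"] J_subset by auto

lemma rr_ge_1: "1 \<le> i \<Longrightarrow> 1 \<le> rr n J i"
  using card_union_atLeastAtMost_le[of i] by (simp add: rr_def)

lemma rr_Suc_not_in:
  assumes "1 \<le> i" "i \<le> n" "i \<notin> J"
  shows "rr n J (Suc i) = Suc (rr n J i)"
proof -
  have "card (J \<union> {i..n}) = Suc (card (J \<union> {Suc i..n}))"
    using assms by (simp add: union_atLeastAtMost_eq_insert)
  then show ?thesis
    using card_union_atLeastAtMost_le[OF assms(1)] by (simp add: rr_def)
qed

lemma pd_h2_Suc_in_IJ:
  assumes h2_in_IJ:
      "\<And>i. 1 \<le> i \<Longrightarrow> i \<le> Suc n \<Longrightarrow> rr n J i \<le> m \<Longrightarrow> in_IJ n J (h2 m (J \<union> {i..n}))"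
    and pd_h2_in_IJ:
      "\<And>i k. i \<le> Suc n \<Longrightarrow> k \<in> J \<Longrightarrow> k < i \<Longrightarrow> rr n J i \<le> m \<Longrightarrow>
         in_IJ n J (pd k (h2 m (J \<union> {i..n})))"
  shows "i \<le> Suc n \<Longrightarrow> k \<in> J \<Longrightarrow> k < i \<Longrightarrow> rr n J i \<le> Suc m \<Longrightarrow>
           in_IJ n J (pd k (h2 (Suc m) (J \<union> {i..n})))"
proof (induction i arbitrary: k)
  case 0
  then show ?case by simp
next
  case (Suc i)
  have i: "1 \<le> i" "i \<le> n"
    using Suc.prems J_subset by auto
  consider (not_in) "i \<notin> J" | (below) "i \<in> J" "k < i" | (at) "i \<in> J" "k = i"
    using Suc.prems(3) by linarith
  then show ?case
  proof cases
    case not_in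
    have "rr n J i \<le> m"
      using Suc.prems(4) rr_Suc_not_in[OF i not_in] by simp
    moreover have "k < i" "k \<noteq> i"
      using Suc.prems(2,3) not_in by (auto simp: less_Suc_eq)
    ultimately show ?thesis
      using Suc.IH[of k] pd_h2_in_IJ[of i k] Suc.prems(1,2) i not_in
        pd_h2_Suc_remove[of "J \<union> {Suc i..n}" i k m]
      by (simp add: union_atLeastAtMost_eq_insert in_IJ_diff in_IJ_mult)
  next
    case below
    then show ?thesis
      using Suc.IH[of k] Suc.prems rr_Suc_in union_atLeastAtMost_Suc_in by simp
  next
    case at
    have set_eq: "J \<union> {Suc i..n} = J \<union> {i..n}" and rr_eq: "rr n J (Suc i) = rr n J i"
      using at union_atLeastAtMost_Suc_in rr_Suc_in by auto
    show ?thesis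
    proof (cases "rr n J i = Suc m")
      case True
      then have "pd k (h2 (Suc m) (J \<union> {Suc i..n})) = pJ n J i"
        using at set_eq by (simp add: pJ_def)
      then show ?thesis
        using pJ_in_IJ i by simp
    next
      case False
      then have "rr n J i \<le> m"
        using Suc.prems(4) rr_eq by simp
      then show ?thesis
        using at set_eq rr_eq i h2_in_IJ[of i] pd_h2_in_IJ[of "Suc i" i] Suc.prems(1)
          pd_h2_Suc_self[of "J \<union> {i..n}" i m]
        by (simp add: in_IJ_add in_IJ_mult mult.assoc)
    qed
  qed
qed

lemma h2_Suc_in_IJ:
  assumes h2_in_IJ:
      "\<And>i. 1 \<le> i \<Longrightarrow> i \<le> Suc n \<Longrightarrow> rr n J i \<le> m \<Longrightarrow> in_IJ n J (h2 m (J \<union> {i..n}))"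
    and pd_h2_in_IJ:
      "\<And>k. k \<in> J \<Longrightarrow> rr n J (Suc n) \<le> Suc m \<Longrightarrow> in_IJ n J (pd k (h2 (Suc m) J))"
    and "1 \<le> i" "i \<le> Suc n"
  shows "rr n J i \<le> Suc m \<Longrightarrow> in_IJ n J (h2 (Suc m) (J \<union> {i..n}))"
  using \<open>i \<le> Suc n\<close>
proof (induction rule: inc_induct)
  case base
  then show ?case
    using pd_h2_in_IJ by (simp add: h2_Suc_in_IJ_by_euler)
next
  case (step i)
  have i: "1 \<le> i" "i \<le> n"
    using step.hyps \<open>1 \<le> _\<close> by auto
  show ?case
  proof (cases "i \<in> J")
    case True
    then show ?thesis
      using step rr_Suc_in union_atLeastAtMost_Suc_in by simp
  next
    case not_in: False
    show ?thesis
    proof (cases "rr n J i = Suc m")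
      case True
      then show ?thesis
        using pJ_in_IJ[of i n J] i not_in by (simp add: pJ_def)
    next
      case False
      then have "rr n J i \<le> m"
        using step.prems by simp
      then show ?thesis
        using step.IH rr_Suc_not_in[OF i not_in] h2_in_IJ[of i] i not_in
          h2_insert[of "J \<union> {Suc i..n}" i m]
        by (simp add: union_atLeastAtMost_eq_insert in_IJ_add in_IJ_mult)
    qed
  qed
qed

lemma h2_in_IJ_and_pd_h2_in_IJ:
  "(\<forall>i. 1 \<le> i \<longrightarrow> i \<le> Suc n \<longrightarrow> rr n J i \<le> m \<longrightarrow> in_IJ n J (h2 m (J \<union> {i..n}))) \<and>
   (\<forall>i k. i \<le> Suc n \<longrightarrow> k \<in> J \<longrightarrow> k < i \<longrightarrow> rr n J i \<le> m \<longrightarrow>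
      in_IJ n J (pd k (h2 m (J \<union> {i..n}))))"
proof (induction m)
  case 0
  have "1 \<le> i" if "k \<in> J" "k < i" for i k
    using that J_subset by auto
  then show ?case
    using rr_ge_1 by (metis le_zero_eq not_one_le_zero)
next
  case (Suc m)
  have pd_Suc: "in_IJ n J (pd k (h2 (Suc m) (J \<union> {i..n})))"
    if "i \<le> Suc n" "k \<in> J" "k < i" "rr n J i \<le> Suc m" for i k
    using pd_h2_Suc_in_IJ[of m] Suc.IH that by blast
  have "in_IJ n J (h2 (Suc m) (J \<union> {i..n}))"
    if "1 \<le> i" "i \<le> Suc n" "rr n J i \<le> Suc m" for i
    using h2_Suc_in_IJ[of m i] Suc.IH pd_Suc[of "Suc n"] J_subset that by force
  with pd_Suc show ?case
    by blast
qed

end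

theorem mainTheorem4:
  fixes n :: nat and J :: "nat set" and j :: nat
  assumes "J \<subseteq> {1..n}" and "j \<in> J"
  shows "in_IJ n J (pd j (h2 (n - card J + 1) J))"
proof -
  have "card J \<le> n"
    using card_mono[OF _ assms(1)] by simp
  then have "rr n J (Suc n) = n - card J + 1"
    by (simp add: rr_def)
  moreover have "j < Suc n"
    using assms by auto
  ultimately show ?thesis
    using h2_in_IJ_and_pd_h2_in_IJ[OF assms(1), of "n - card J + 1"] assms(2) by auto
qed

end
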